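(* Let $\succsim=(\succsim_i)_{i\in I}$ be a profile of marginal preferences and let $\mu\in\mathcal M$ be a matching. Then $\mu$ is unambiguously individually rational at $\succsim$ if and only if $\mu$ is component-wise individually rational at $\succsim$.
   Context: Setup. $I=\{1,\dots,n\}$ is a finite set of agents and $O$ a finite set of objects. Each agent $i$ is endowed with a nonempty set $\Omega_i\subseteq O$; the sets $\Omega_i$ are pairwise disjoint and $\bigcup_{i\in I}\Omega_i=O$. A matching is a map $\mu:I\to 2^O$ with $\mu(i)\cap\mu(j)=\emptyset$ for $i\neq j$ and $|\mu(i)|=|\Omega_i|$ for every $i$; $\mathcal M$ is the set of matchings, and $\Omega$ also denotes the endowment matching $i\mapsto\Omega_i$. Agent $i$'s consumption set is $\mathcal X_i=\{X\subseteq O:|X|=|\Omega_i|\}$; a preference of $i$ is a complete, transitive, reflexive relation $R_i$ on $\mathcal X_i$ with strict part $P_i$. A marginal preference of $i$ is a weak order $\succsim_i$ on $O$ (strict part $\succ_i$). $R_i$ is responsive to $\succsim_i$ if for all $o,p\in O$ and all $Q\in\mathcal X_i$ with $o\in Q$, $p\notin Q$: $Q\mathrel{R_i}(Q\setminus\{o\})\cup\{p\}$ iff $o\succsim_i p$. Given a profile $R$, $\mu$ is individually rational at $R$ if $\mu(i)\mathrel{R_i}\Omega_i$ for all $i$; $\mu'$ Pareto-improves $\mu$ if $\mu'(i)\mathrel{R_i}\mu(i)$ for all $i$ and $\mu'(i)\mathrel{P_i}\mu(i)$ for some $i$; $\mu$ is Pareto-efficient if no matching Pareto-improves it. Given a profile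 $\succsim$ of marginal preferences, $\mu$ is unambiguously individually rational if it is individually rational at every profile $R$ such that each $R_i$ is responsive to $\succsim_i$. The matching $\mu$ is component-wise individually rational at $\succsim$ if for every $i\in I$ and every $\omega\in\Omega_i$, $|\{o\in\mu(i):o\succsim_i\omega\}|\ \ge\ |\{o\in\Omega_i:o\succsim_i\omega\}|$. *)

theory Defs
  imports Main
begin

text \<open>Marginal preferences: m i o p means o \<succsim>_i p.
  Preferences: R i X Y means X R_i Y (on bundles).\<close>

definition weak_order_on :: "'a set \<Rightarrow> ('a \<Rightarrow> 'a \<Rightarrow> bool) \<Rightarrow> bool" where
  "weak_order_on A r \<longleftrightarrow>
     (\<forall>x\<in>A. r x x) \<and>
     (\<forall>x\<in>A. \<forall>y\<in>A. r x y \<or> r y x) \<and>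
     (\<forall>x\<in>A. \<forall>y\<in>A. \<forall>z\<in>A. r x y \<longrightarrow> r y z \<longrightarrow> r x z)"

definition endowment_economy :: "'i set \<Rightarrow> 'o set \<Rightarrow> ('i \<Rightarrow> 'o set) \<Rightarrow> bool" where
  "endowment_economy I Obj Omega \<longleftrightarrow>
     finite I \<and> finite Obj \<and>
     (\<forall>i\<in>I. Omega i \<noteq> {} \<and> Omega i \<subseteq> Obj) \<and>
     (\<forall>i\<in>I. \<forall>j\<in>I. i \<noteq> j \<longrightarrow> Omega i \<inter> Omega j = {}) \<and>
     (\<Union>i\<in>I. Omega i) = Obj"

definition is_matching :: "'i set \<Rightarrow> 'o set \<Rightarrow> ('i \<Rightarrow> 'o set) \<Rightarrow> ('i \<Rightarrow> 'o set) \<Rightarrow> bool" where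
  "is_matching I Obj Omega mu \<longleftrightarrow>
     (\<forall>i\<in>I. mu i \<subseteq> Obj \<and> card (mu i) = card (Omega i)) \<and>
     (\<forall>i\<in>I. \<forall>j\<in>I. i \<noteq> j \<longrightarrow> mu i \<inter> mu j = {})"

definition consumption_set :: "'o set \<Rightarrow> ('i \<Rightarrow> 'o set) \<Rightarrow> 'i \<Rightarrow> 'o set set" where
  "consumption_set Obj Omega i = {X. X \<subseteq> Obj \<and> card X = card (Omega i)}"

definition responsive ::
  "'o set \<Rightarrow> 'o set set \<Rightarrow> ('o set \<Rightarrow> 'o set \<Rightarrow> bool) \<Rightarrow> ('o \<Rightarrow> 'o \<Rightarrow> bool) \<Rightarrow> bool" where
  "responsive Obj X Ri mi \<longleftrightarrow>
     (\<forall>a\<in>Obj. \<forall>p\<in>Obj. \<forall>Q\<in>X. a \<in> Q \<longrightarrow> p \<notin> Q \<longrightarrow>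
        (Ri Q ((Q - {a}) \<union> {p}) \<longleftrightarrow> mi a p))"

definition individually_rational ::
  "'i set \<Rightarrow> ('i \<Rightarrow> 'o set) \<Rightarrow> ('i \<Rightarrow> 'o set \<Rightarrow> 'o set \<Rightarrow> bool) \<Rightarrow> ('i \<Rightarrow> 'o set) \<Rightarrow> bool" where
  "individually_rational I Omega R mu \<longleftrightarrow> (\<forall>i\<in>I. R i (mu i) (Omega i))"

definition unambiguously_IR ::
  "'i set \<Rightarrow> 'o set \<Rightarrow> ('i \<Rightarrow> 'o set) \<Rightarrow> ('i \<Rightarrow> 'o \<Rightarrow> 'o \<Rightarrow> bool) \<Rightarrow> ('i \<Rightarrow> 'o set) \<Rightarrow> bool" where
  "unambiguously_IR I Obj Omega m mu \<longleftrightarrow>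
     (\<forall>R. (\<forall>i\<in>I. weak_order_on (consumption_set Obj Omega i) (R i) \<and>
                 responsive Obj (consumption_set Obj Omega i) (R i) (m i))
          \<longrightarrow> individually_rational I Omega R mu)"

definition componentwise_IR ::
  "'i set \<Rightarrow> ('i \<Rightarrow> 'o set) \<Rightarrow> ('i \<Rightarrow> 'o \<Rightarrow> 'o \<Rightarrow> bool) \<Rightarrow> ('i \<Rightarrow> 'o set) \<Rightarrow> bool" where
  "componentwise_IR I Omega m mu \<longleftrightarrow>
     (\<forall>i\<in>I. \<forall>w\<in>Omega i. card {a\<in>mu i. m i a w} \<ge> card {a\<in>Omega i. m i a w})"

end

theory Submission
  imports Defs
begin

text \<open>Responsive preferences only see the marginal ranking, so what matters is how many
  objects of a bundle lie weakly above each threshold; the component-wise condition at the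
  endowed objects already controls every threshold.
  If these counts dominate, Omega i is turned into mu i by swaps, each replacing the best object
  still to be given up by the best object still to be gained; dominance makes the latter weakly
  better, so each swap is a weak improvement for every responsive preference.
  If instead mu i has fewer objects weakly above some endowed object w, the additive utility
  giving such objects a bonus larger than any sum of ranks is responsive and ranks mu i strictly
  below Omega i.\<close>

lemma weak_order_on_converse:
  "weak_order_on A r \<Longrightarrow> weak_order_on A (\<lambda>x y. r y x)"
  unfolding weak_order_on_def by blast

lemma weak_order_on_reflD: "weak_order_on A r \<Longrightarrow> x \<in> A \<Longrightarrow> r x x"
  unfolding weak_order_on_def by blast

lemma weak_order_on_totalD:
  "weak_order_on A r \<Longrightarrow> x \<in> A \<Longrightarrow> y \<in> A \<Longrightarrow> r x y \<or> r y x"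
  unfolding weak_order_on_def by blast

lemma weak_order_on_transD:
  "weak_order_on A r \<Longrightarrow> x \<in> A \<Longrightarrow> y \<in> A \<Longrightarrow> z \<in> A \<Longrightarrow> r x y \<Longrightarrow> r y z \<Longrightarrow> r x z"
  unfolding weak_order_on_def by blast

lemma responsiveD:
  assumes "responsive Obj C R r" "a \<in> Obj" "p \<in> Obj" "Q \<in> C" "a \<in> Q" "p \<notin> Q"
  shows "R Q (Q - {a} \<union> {p}) \<longleftrightarrow> r a p"
  using assms unfolding responsive_def by blast

lemma endowment_economy_finite: "endowment_economy I Obj Omega \<Longrightarrow> finite Obj"
  by (simp add: endowment_economy_def)

lemma endowment_economy_subset: "endowment_economy I Obj Omega \<Longrightarrow> i \<in> I \<Longrightarrow> Omega i \<subseteq> Obj"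
  by (simp add: endowment_economy_def)

lemma is_matchingD:
  "is_matching I Obj Omega mu \<Longrightarrow> i \<in> I \<Longrightarrow> mu i \<subseteq> Obj \<and> card (mu i) = card (Omega i)"
  by (simp add: is_matching_def)

lemma weak_order_on_finite_has_max:
  assumes wo: "weak_order_on A r" and "finite S" "S \<noteq> {}" "S \<subseteq> A"
  shows "\<exists>x\<in>S. \<forall>a\<in>S. r x a"
  using assms(2-4)
proof (induction S rule: finite_ne_induct)
  case (singleton x)
  then show ?case using wo unfolding weak_order_on_def by blast
next
  case (insert x F)
  then obtain y where y: "y \<in> F" "\<forall>a\<in>F. r y a" by blast
  show ?case
  proof (cases "r x y")
    case True
    then have "\<forall>a\<in>insert x F. r x a"
      using wo y insert.prems unfolding weak_order_on_def by blast
    then show ?thesis by blast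
  next
    case False
    then have "r y x" using wo y insert.prems unfolding weak_order_on_def by blast
    then show ?thesis using y by blast
  qed
qed

lemma weak_order_on_finite_has_min:
  assumes "weak_order_on A r" and "finite S" "S \<noteq> {}" "S \<subseteq> A"
  shows "\<exists>x\<in>S. \<forall>a\<in>S. r a x"
  using weak_order_on_finite_has_max[OF weak_order_on_converse[OF assms(1)] assms(2-4)] .

text \<open>For a threshold w compare the counts at the worst member of X weakly above w.\<close>

lemma upper_count_dominance_extends:
  assumes wo: "weak_order_on Obj r" and "X \<subseteq> Obj" "Y \<subseteq> Obj" "finite X" "finite Y"
    and dom: "\<forall>v\<in>X. card {a\<in>X. r a v} \<le> card {a\<in>Y. r a v}" and w: "w \<in> Obj"
  shows "card {a\<in>X. r a w} \<le> card {a\<in>Y. r a w}"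
proof (cases "{a\<in>X. r a w} = {}")
  case False
  then obtain v where v: "v \<in> X" "r v w" and v_min: "\<forall>a\<in>{a\<in>X. r a w}. r a v"
    using weak_order_on_finite_has_min[OF wo _ False] \<open>finite X\<close> \<open>X \<subseteq> Obj\<close> by auto
  have "card {a\<in>X. r a w} \<le> card {a\<in>X. r a v}"
    using v_min \<open>finite X\<close> by (intro card_mono) auto
  also have "\<dots> \<le> card {a\<in>Y. r a v}" using dom v(1) by blast
  also have "\<dots> \<le> card {a\<in>Y. r a w}"
  proof (intro card_mono)
    show "{a\<in>Y. r a v} \<subseteq> {a\<in>Y. r a w}"
      using wo v w \<open>X \<subseteq> Obj\<close> \<open>Y \<subseteq> Obj\<close> unfolding weak_order_on_def by blast
  qed (use \<open>finite Y\<close> in auto)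
  finally show ?thesis .
next
  case True
  then show ?thesis by (simp only: card.empty le0)
qed

lemma upper_count_swap_dominated:
  assumes wo: "weak_order_on Obj r" and "X \<subseteq> Obj" "finite X" "finite Y"
    and x: "x \<in> X - Y" and x_max: "\<forall>a\<in>X - Y. r x a" and y: "y \<in> Y - X" and w: "w \<in> Obj"
    and dom: "card {a\<in>X. r a w} \<le> card {a\<in>Y. r a w}"
  shows "card {a\<in>insert y (X - {x}). r a w} \<le> card {a\<in>Y. r a w}"
proof (cases "r x w")
  case True
  have "card {a\<in>insert y (X - {x}). r a w} \<le> card (insert y ({a\<in>X. r a w} - {x}))"
    using \<open>finite X\<close> by (intro card_mono) auto
  also have "\<dots> \<le> card {a\<in>X. r a w}"
  proof -
    have "x \<in> {a\<in>X. r a w}" "finite {a\<in>X. r a w}" using True x \<open>finite X\<close> by auto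
    then show ?thesis by (intro card_insert_le_m1) (auto simp: card_gt_0_iff card_Diff_singleton)
  qed
  finally show ?thesis using dom by linarith
next
  case False
  then have "\<forall>a\<in>X - Y. \<not> r a w"
    using wo x x_max w \<open>X \<subseteq> Obj\<close> unfolding weak_order_on_def by blast
  then have "{a\<in>insert y (X - {x}). r a w} \<subseteq> {a\<in>Y. r a w}" using y by blast
  then show ?thesis using \<open>finite Y\<close> by (intro card_mono) auto
qed

text \<open>Otherwise every object Y gains is strictly below x, so Y has fewer objects weakly
  above x than X.\<close>

lemma best_gained_beats_best_lost:
  assumes wo: "weak_order_on Obj r" and "X \<subseteq> Obj" "Y \<subseteq> Obj" "finite X"
    and x: "x \<in> X - Y" and y: "y \<in> Y - X" and y_max: "\<forall>a\<in>Y - X. r y a"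
    and dom: "card {a\<in>X. r a x} \<le> card {a\<in>Y. r a x}"
  shows "r y x"
proof (rule ccontr)
  assume "\<not> r y x"
  then have "\<forall>a\<in>Y - X. \<not> r a x"
    using wo y y_max x \<open>X \<subseteq> Obj\<close> \<open>Y \<subseteq> Obj\<close> unfolding weak_order_on_def by blast
  moreover have "r x x" using wo x \<open>X \<subseteq> Obj\<close> unfolding weak_order_on_def by blast
  ultimately have "{a\<in>Y. r a x} \<subset> {a\<in>X. r a x}" using x by blast
  then have "card {a\<in>Y. r a x} < card {a\<in>X. r a x}"
    using \<open>finite X\<close> by (intro psubset_card_mono) auto
  then show False using dom by linarith
qed

text \<open>Induction on the number of swaps X' = X - {x} + {y}, with x best in X - Y and y best
  in Y - X: the swap preserves dominance, and R X' X holds by responsiveness since y is weakly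
  better than x.\<close>

lemma responsive_upper_count_dominance:
  assumes fin: "finite Obj" and wo: "weak_order_on Obj r"
    and WR: "weak_order_on C R" and resp: "responsive Obj C R r"
    and C: "C = {X. X \<subseteq> Obj \<and> card X = k}"
    and "X \<in> C" "Y \<in> C" and dom: "\<forall>w\<in>Obj. card {a\<in>X. r a w} \<le> card {a\<in>Y. r a w}"
  shows "R Y X"
  using assms(6-8)
proof (induction "card (Y - X)" arbitrary: X)
  case 0
  have "finite X" "finite Y" "card Y = card X"
    using 0 C fin finite_subset by auto
  moreover have "Y \<subseteq> X" using 0(1) \<open>finite Y\<close> by simp
  ultimately have "Y = X" by (simp add: card_subset_eq)
  then show ?case using weak_order_on_reflD[OF WR \<open>Y \<in> C\<close>] by simp
next
  case (Suc n X)
  have XY: "X \<subseteq> Obj" "Y \<subseteq> Obj" "card X = card Y"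
    using Suc.prems(1,2) C by auto
  then have fin_XY: "finite X" "finite Y" using fin finite_subset by auto
  then have "card (X - Y) = card (Y - X)"
    using XY(3) by (metis Int_commute card_Diff_subset_Int finite_Int)
  then have "X - Y \<noteq> {}" "Y - X \<noteq> {}" using Suc.hyps(2) by (metis card.empty Zero_not_Suc)+
  then obtain x y where x: "x \<in> X - Y" "\<forall>a\<in>X - Y. r x a"
    and y: "y \<in> Y - X" "\<forall>a\<in>Y - X. r y a"
    using weak_order_on_finite_has_max[OF wo] XY fin_XY by (meson Diff_subset finite_Diff order_trans)
  have xy_Obj: "x \<in> Obj" "y \<in> Obj" using x y XY by auto
  define X' where "X' = insert y (X - {x})"
  have "card X > 0" using x fin_XY by (auto simp: card_gt_0_iff)
  then have "card X' = card X"
    using x y fin_XY by (simp add: X'_def card_insert_if card_Diff_singleton)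
  moreover have "X' \<subseteq> Obj" using XY(1) xy_Obj(2) by (auto simp: X'_def)
  ultimately have X'_C: "X' \<in> C" using Suc.prems(1) C by simp
  have "Y - X' = (Y - X) - {y}" using x by (auto simp: X'_def)
  then have n: "n = card (Y - X')" using Suc.hyps(2) y fin_XY by simp
  have dom': "\<forall>w\<in>Obj. card {a\<in>X'. r a w} \<le> card {a\<in>Y. r a w}"
  proof
    fix w assume w: "w \<in> Obj"
    show "card {a\<in>X'. r a w} \<le> card {a\<in>Y. r a w}"
      unfolding X'_def
      by (rule upper_count_swap_dominated[OF wo XY(1) fin_XY x y(1) w Suc.prems(3)[rule_format, OF w]])
  qed
  have "R Y X'" by (rule Suc.hyps(1)[OF n X'_C Suc.prems(2) dom'])
  moreover have "R X' X"
  proof -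
    have "r y x"
      by (rule best_gained_beats_best_lost[OF wo XY(1,2) fin_XY(1) x(1) y
            Suc.prems(3)[rule_format, OF xy_Obj(1)]])
    moreover have "X' - {y} \<union> {x} = X" using x y by (auto simp: X'_def)
    moreover have "y \<in> X'" "x \<notin> X'" using x y by (auto simp: X'_def)
    ultimately show ?thesis using responsiveD[OF resp xy_Obj(2,1) X'_C] by simp
  qed
  ultimately show ?case by (rule weak_order_on_transD[OF WR Suc.prems(2) X'_C Suc.prems(1)])
qed

lemma additive_utility_weak_order_responsive:
  fixes u :: "'o \<Rightarrow> 'a::linordered_ab_group_add"
  assumes fin: "\<forall>Q\<in>C. finite Q" and rep: "\<And>a p. a \<in> Obj \<Longrightarrow> p \<in> Obj \<Longrightarrow> u p \<le> u a \<longleftrightarrow> r a p"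
  shows "weak_order_on C (\<lambda>X Y. sum u Y \<le> sum u X)"
    and "responsive Obj C (\<lambda>X Y. sum u Y \<le> sum u X) r"
proof -
  show "weak_order_on C (\<lambda>X Y. sum u Y \<le> sum u X)"
    unfolding weak_order_on_def by (meson linear order_trans)
  show "responsive Obj C (\<lambda>X Y. sum u Y \<le> sum u X) r"
    unfolding responsive_def
  proof (intro ballI impI)
    fix a p Q assume "a \<in> Obj" "p \<in> Obj" "Q \<in> C" "a \<in> Q" "p \<notin> Q"
    then have "sum u Q = u a + sum u (Q - {a})"
      and "sum u (Q - {a} \<union> {p}) = u p + sum u (Q - {a})"
      using fin by (simp_all add: sum.remove)
    then show "sum u (Q - {a} \<union> {p}) \<le> sum u Q \<longleftrightarrow> r a p"
      using rep[OF \<open>a \<in> Obj\<close> \<open>p \<in> Obj\<close>] by simp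
  qed
qed

lemma weak_order_on_rank_le_iff:
  assumes fin: "finite Obj" and wo: "weak_order_on Obj r" and a: "a \<in> Obj" and p: "p \<in> Obj"
  shows "card {b\<in>Obj. r p b} \<le> card {b\<in>Obj. r a b} \<longleftrightarrow> r a p"
proof
  assume le: "card {b\<in>Obj. r p b} \<le> card {b\<in>Obj. r a b}"
  show "r a p"
  proof (rule ccontr)
    assume "\<not> r a p"
    then have "r p a" using weak_order_on_totalD[OF wo a p] by blast
    then have "{b\<in>Obj. r a b} \<subseteq> {b\<in>Obj. r p b}"
      using weak_order_on_transD[OF wo p a] by blast
    moreover have "p \<in> {b\<in>Obj. r p b} - {b\<in>Obj. r a b}"
      using weak_order_on_reflD[OF wo p] p \<open>\<not> r a p\<close> by blast
    ultimately have "card {b\<in>Obj. r a b} < card {b\<in>Obj. r p b}"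
      using fin by (intro psubset_card_mono) auto
    then show False using le by simp
  qed
next
  assume "r a p"
  then have "{b\<in>Obj. r p b} \<subseteq> {b\<in>Obj. r a b}"
    using weak_order_on_transD[OF wo a p] by blast
  then show "card {b\<in>Obj. r p b} \<le> card {b\<in>Obj. r a b}" using fin by (intro card_mono) auto
qed

lemma upper_set_rank_utility_represents:
  assumes fin: "finite Obj" and wo: "weak_order_on Obj r"
    and up: "\<And>a p. a \<in> Obj \<Longrightarrow> p \<in> Obj \<Longrightarrow> r a p \<Longrightarrow> P p \<Longrightarrow> P a"
    and N: "int (card Obj) < N" and a: "a \<in> Obj" and p: "p \<in> Obj"
  shows "(if P p then N else 0) + int (card {b\<in>Obj. r p b})
           \<le> (if P a then N else 0) + int (card {b\<in>Obj. r a b}) \<longleftrightarrow> r a p"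
proof -
  have rank_lt: "int (card {b\<in>Obj. r x b}) < N" for x
    using N card_mono[OF fin, of "{b\<in>Obj. r x b}"] by auto
  consider "P a = P p" | "P a" "\<not> P p" | "\<not> P a" "P p" by blast
  then show ?thesis
  proof cases
    case 1
    then show ?thesis using weak_order_on_rank_le_iff[OF fin wo a p] by auto
  next
    case 2
    then have "r a p" using up[OF p a] weak_order_on_totalD[OF wo a p] by blast
    then show ?thesis using 2 rank_lt[of p] by simp
  next
    case 3
    then have "\<not> r a p" using up[OF a p] by blast
    then show ?thesis using 3 rank_lt[of a] by simp
  qed
qed

lemma sum_threshold_utility_less:
  fixes g :: "'a \<Rightarrow> int"
  assumes "finite X" "finite Y" and g_nonneg: "\<forall>a\<in>X \<union> Y. 0 \<le> g a" and g_small: "sum g Y < N"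
    and fewer: "card {a\<in>Y. P a} < card {a\<in>X. P a}"
  shows "(\<Sum>a\<in>Y. (if P a then N else 0) + g a) < (\<Sum>a\<in>X. (if P a then N else 0) + g a)"
proof -
  have split: "(\<Sum>a\<in>Z. (if P a then N else 0) + g a) = N * int (card {a\<in>Z. P a}) + sum g Z"
    if "finite Z" for Z
    using that by (simp add: sum.distrib sum.If_cases Int_def)
  have "0 \<le> sum g Y" "0 \<le> sum g X" using g_nonneg by (auto intro: sum_nonneg)
  then have "N * int (card {a\<in>Y. P a}) + sum g Y < N * (int (card {a\<in>Y. P a}) + 1)"
    using g_small by (simp add: algebra_simps)
  also have "\<dots> \<le> N * int (card {a\<in>X. P a})"
    using fewer \<open>0 \<le> sum g Y\<close> g_small by (intro mult_left_mono) auto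
  finally show ?thesis using split \<open>finite X\<close> \<open>finite Y\<close> \<open>0 \<le> sum g X\<close> by simp
qed

lemma unambiguously_IR_imp_componentwise_IR:
  assumes "endowment_economy I Obj Omega" and wo: "\<forall>i\<in>I. weak_order_on Obj (m i)"
    and "is_matching I Obj Omega mu" and UIR: "unambiguously_IR I Obj Omega m mu"
  shows "componentwise_IR I Omega m mu"
  unfolding componentwise_IR_def
proof (intro ballI, rule ccontr)
  fix i w
  assume i: "i \<in> I" and w: "w \<in> Omega i"
    and "\<not> card {a\<in>Omega i. m i a w} \<le> card {a\<in>mu i. m i a w}"
  then have fewer: "card {a\<in>mu i. m i a w} < card {a\<in>Omega i. m i a w}" by simp
  have fin: "finite Obj" and sub: "Omega i \<subseteq> Obj" "mu i \<subseteq> Obj"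
    using endowment_economy_finite[OF assms(1)] endowment_economy_subset[OF assms(1) i]
      is_matchingD[OF assms(3) i] by auto
  define N :: int where "N = int (card Obj * card Obj) + 1"
  have N: "int (card Obj) < N" using le_square[of "card Obj"] unfolding N_def by linarith
  define u where "u j a = (if j = i \<and> m i a w then N else 0) + int (card {b\<in>Obj. m j a b})"
    for j a
  have up: "j = i \<and> m i a w"
    if "a \<in> Obj" "p \<in> Obj" "m j a p" "j = i \<and> m i p w" for j a p
    using that weak_order_on_transD[OF wo[rule_format, OF i] _ _ subsetD[OF sub(1) w]] by blast
  have rep: "u j p \<le> u j a \<longleftrightarrow> m j a p" if "j \<in> I" "a \<in> Obj" "p \<in> Obj" for j a p
    unfolding u_def
    by (rule upper_set_rank_utility_represents[OF fin wo[rule_format, OF that(1)] up[of _ _ j] N that(2,3)])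
  have fin_C: "\<forall>X\<in>consumption_set Obj Omega j. finite X" for j
    using fin by (auto simp: consumption_set_def intro: finite_subset)
  have "\<forall>j\<in>I. weak_order_on (consumption_set Obj Omega j) (\<lambda>X Y. sum (u j) Y \<le> sum (u j) X)
      \<and> responsive Obj (consumption_set Obj Omega j) (\<lambda>X Y. sum (u j) Y \<le> sum (u j) X) (m j)"
  proof
    fix j assume "j \<in> I"
    note additive = additive_utility_weak_order_responsive[OF fin_C rep[OF \<open>j \<in> I\<close>]]
    show "weak_order_on (consumption_set Obj Omega j) (\<lambda>X Y. sum (u j) Y \<le> sum (u j) X)
      \<and> responsive Obj (consumption_set Obj Omega j) (\<lambda>X Y. sum (u j) Y \<le> sum (u j) X) (m j)"
      using additive by (rule conjI)
  qed
  then have "individually_rational I Omega (\<lambda>j X Y. sum (u j) Y \<le> sum (u j) X) mu"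
    by (rule UIR[unfolded unambiguously_IR_def, THEN spec, THEN mp])
  then have "sum (u i) (Omega i) \<le> sum (u i) (mu i)"
    using i unfolding individually_rational_def by simp
  moreover have "sum (u i) (mu i) < sum (u i) (Omega i)"
  proof -
    have fin_i: "finite (Omega i)" "finite (mu i)" using fin sub finite_subset by auto
    have u_i: "u i = (\<lambda>a. (if m i a w then N else 0) + int (card {b\<in>Obj. m i a b}))"
      by (simp add: u_def fun_eq_iff)
    have "(\<Sum>a\<in>mu i. int (card {b\<in>Obj. m i a b})) \<le> int (card (mu i)) * int (card Obj)"
      using fin by (intro sum_bounded_above) (simp add: card_mono)
    also have "\<dots> \<le> int (card Obj * card Obj)"
      using card_mono[OF fin sub(2)] by (simp add: mult_right_mono)
    also have "\<dots> < N" unfolding N_def by simp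
    finally have "(\<Sum>a\<in>mu i. int (card {b\<in>Obj. m i a b})) < N" .
    then show ?thesis
      unfolding u_i by (intro sum_threshold_utility_less[OF fin_i _ _ fewer]) simp_all
  qed
  ultimately show False by simp
qed

lemma componentwise_IR_imp_unambiguously_IR:
  assumes "endowment_economy I Obj Omega" and wo: "\<forall>i\<in>I. weak_order_on Obj (m i)"
    and "is_matching I Obj Omega mu" and CIR: "componentwise_IR I Omega m mu"
  shows "unambiguously_IR I Obj Omega m mu"
  unfolding unambiguously_IR_def individually_rational_def
proof (intro allI impI ballI)
  fix R i
  assume R: "\<forall>i\<in>I. weak_order_on (consumption_set Obj Omega i) (R i) \<and>
               responsive Obj (consumption_set Obj Omega i) (R i) (m i)"
    and i: "i \<in> I"
  have fin: "finite Obj" and sub: "Omega i \<subseteq> Obj" "mu i \<subseteq> Obj"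
    and card: "card (mu i) = card (Omega i)"
    using endowment_economy_finite[OF assms(1)] endowment_economy_subset[OF assms(1) i]
      is_matchingD[OF assms(3) i] by auto
  have "finite (Omega i)" "finite (mu i)" using fin sub finite_subset by auto
  then have dom: "\<forall>w\<in>Obj. card {a\<in>Omega i. m i a w} \<le> card {a\<in>mu i. m i a w}"
    using upper_count_dominance_extends[OF wo[rule_format, OF i] sub] CIR i
    unfolding componentwise_IR_def by blast
  have "Omega i \<in> consumption_set Obj Omega i" "mu i \<in> consumption_set Obj Omega i"
    using sub card by (auto simp: consumption_set_def)
  with R i show "R i (mu i) (Omega i)"
    by (intro responsive_upper_count_dominance[OF fin wo[rule_format, OF i] _ _ consumption_set_def _ _ dom])
      auto
qed

theorem proposition1:
  fixes I :: "'i set" and Obj :: "'o set" and Omega :: "'i \<Rightarrow> 'o set"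
    and m :: "'i \<Rightarrow> 'o \<Rightarrow> 'o \<Rightarrow> bool" and mu :: "'i \<Rightarrow> 'o set"
  assumes "endowment_economy I Obj Omega"
    and "\<forall>i\<in>I. weak_order_on Obj (m i)"
    and "is_matching I Obj Omega mu"
  shows "unambiguously_IR I Obj Omega m mu \<longleftrightarrow> componentwise_IR I Omega m mu"
  using unambiguously_IR_imp_componentwise_IR[OF assms]
    componentwise_IR_imp_unambiguously_IR[OF assms] by blast

end
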